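(* Every positive divisor of an odd Gaussian Carmichael number is $G$-cyclic.
   Context: For a positive integer $n$, $\mathcal{G}_n=\{a+bi\in\mathbb{Z}[i]/n\mathbb{Z}[i] : a^2+b^2\equiv 1\pmod n\}$ and $\Phi(n)=|\mathcal{G}_n|$. An integer $n\ge1$ is $G$-cyclic if $\gcd(\Phi(n),n)=1$. The function $\mathcal{F}$ is defined by $\mathcal{F}(n)=n-1$ if $n\equiv 1\pmod 4$, $\mathcal{F}(n)=n+1$ if $n\equiv 3 \pmod 4$, $\mathcal{F}(n)=n$ otherwise. A composite integer $n$ is a Gaussian Fermat pseudoprime to base $z\in\mathbb{Z}[i]$ if $\gcd(n,z\overline{z})=1$ and $(z/\overline{z})^{\mathcal{F}(n)}\equiv 1\pmod n$ in $\mathbb{Z}[i]/n\mathbb{Z}[i]$. A composite $n$ is a Gaussian Carmichael number if it is a Gaussian Fermat pseudoprime to base $z$ for every $z\in\mathbb{Z}[i]$ with $\gcd(n,z\overline{z})=1$. *)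

theory Defs
  imports "HOL-Number_Theory.Number_Theory"
begin

(* Gaussian integers a+bi represented as pairs (a,b) of integers *)
type_synonym gint = "int \<times> int"

definition gmul :: "gint \<Rightarrow> gint \<Rightarrow> gint" where
  "gmul z w = (fst z * fst w - snd z * snd w, fst z * snd w + snd z * fst w)"

definition gone :: gint where "gone = (1, 0)"

definition gpow :: "gint \<Rightarrow> nat \<Rightarrow> gint" where
  "gpow z k = ((gmul z) ^^ k) gone"

definition gcnj :: "gint \<Rightarrow> gint" where
  "gcnj z = (fst z, - snd z)"

(* z * conj z = a^2 + b^2 *)
definition gnorm :: "gint \<Rightarrow> int" where
  "gnorm z = fst z ^ 2 + snd z ^ 2"

(* congruence in Z[i]/nZ[i] *)
definition gcong :: "nat \<Rightarrow> gint \<Rightarrow> gint \<Rightarrow> bool" where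
  "gcong n z w \<longleftrightarrow> [fst z = fst w] (mod int n) \<and> [snd z = snd w] (mod int n)"

(* G_n, with Z[i]/nZ[i] represented by residues a+bi, 0 <= a,b < n *)
definition G_set :: "nat \<Rightarrow> gint set" where
  "G_set n = {(a, b). 0 \<le> a \<and> a < int n \<and> 0 \<le> b \<and> b < int n \<and> [a^2 + b^2 = 1] (mod int n)}"

definition Phi :: "nat \<Rightarrow> nat" where
  "Phi n = card (G_set n)"

definition G_cyclic :: "nat \<Rightarrow> bool" where
  "G_cyclic n \<longleftrightarrow> n \<ge> 1 \<and> gcd (Phi n) n = 1"

definition FF :: "nat \<Rightarrow> nat" where
  "FF n = (if n mod 4 = 1 then n - 1 else if n mod 4 = 3 then n + 1 else n)"

definition composite :: "nat \<Rightarrow> bool" where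
  "composite n \<longleftrightarrow> n > 1 \<and> \<not> prime n"

(* (z / conj z)^F(n) = 1 in Z[i]/nZ[i]: w is the inverse of conj z modulo n *)
definition gaussian_fermat_psp :: "nat \<Rightarrow> gint \<Rightarrow> bool" where
  "gaussian_fermat_psp n z \<longleftrightarrow> composite n \<and> coprime (int n) (gnorm z) \<and>
     (\<exists>w. gcong n (gmul (gcnj z) w) gone \<and> gcong n (gpow (gmul z w) (FF n)) gone)"

definition gaussian_carmichael :: "nat \<Rightarrow> bool" where
  "gaussian_carmichael n \<longleftrightarrow> composite n \<and>
     (\<forall>z. coprime (int n) (gnorm z) \<longrightarrow> gaussian_fermat_psp n z)"

end

theory Submission
  imports Defs "HOL-Algebra.Sylow" "HOL-Algebra.Multiplicative_Group"
begin

(* Let n be an odd Gaussian Carmichael number and d a divisor of n.  Suppose a prime p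
   divides both d and Phi(d) = |G_d|.

   Two arithmetic facts drive the proof.  First, if z has norm 1 modulo d and norm
   coprime to n, the Carmichael condition for the base z together with z * conj z = 1
   gives z^(2 F(n)) = 1 modulo d.  Second, every prime p dividing the odd number n is
   coprime to 2 F(n), because F(n) = n -+ 1.  Hence an element of G_d with z^p = 1
   also has z^(2 F(n)) = 1, and coprimality of the exponents forces z = 1.

   To apply the first fact to an arbitrary h in G_d we lift h, by the Chinese remainder
   theorem, to some z of norm 1 modulo n; this needs d and n/d coprime, which follows
   from n being squarefree (again proved with the two facts above, using 1 + s i
   with s = n/p when p^2 divides n).  Finally G_d is a finite abelian group, and by
   Cauchy's theorem (derived from Sylow's) it contains an element of order p whenever
   p divides its order: a contradiction, so gcd(Phi(d), d) = 1. *)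

section \<open>Arithmetic of Gaussian integers\<close>

lemma gmul_comm: "gmul z w = gmul w z"
  by (simp add: gmul_def algebra_simps)

lemma gmul_assoc: "gmul (gmul x y) z = gmul x (gmul y z)"
  by (simp add: gmul_def algebra_simps)

lemma gmul_one_left [simp]: "gmul gone z = z"
  by (simp add: gmul_def gone_def)

lemma gmul_one_right [simp]: "gmul z gone = z"
  by (simp add: gmul_def gone_def)

lemma gpow_0 [simp]: "gpow z 0 = gone"
  by (simp add: gpow_def)

lemma gpow_Suc: "gpow z (Suc k) = gmul z (gpow z k)"
  by (simp add: gpow_def)

lemma gpow_1 [simp]: "gpow z 1 = z"
  by (simp add: gpow_Suc)

lemma gpow_add: "gpow z (a + b) = gmul (gpow z a) (gpow z b)"
  by (induction a) (simp_all add: gpow_Suc gmul_assoc)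

lemma gpow_mult: "gpow z (a * b) = gpow (gpow z a) b"
proof (induction b)
  case 0
  then show ?case by simp
next
  case (Suc b)
  have "gpow z (a * Suc b) = gmul (gpow z a) (gpow z (a * b))"
    by (metis gpow_add mult_Suc_right)
  then show ?case using Suc by (simp add: gpow_Suc)
qed

lemma gpow_gone [simp]: "gpow gone k = gone"
  by (induction k) (simp_all add: gpow_Suc)

lemma gpow_square: "gpow (gmul z z) k = gpow z (2 * k)"
proof -
  have "gpow z 2 = gmul z z" by (simp add: numeral_2_eq_2 gpow_Suc)
  then show ?thesis by (simp add: gpow_mult)
qed

lemma gnorm_mult: "gnorm (gmul z w) = gnorm z * gnorm w"
  by (simp add: gnorm_def gmul_def power2_eq_square algebra_simps)

lemma gnorm_gcnj: "gnorm (gcnj z) = gnorm z"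
  by (simp add: gcnj_def gnorm_def)

lemma gmul_gcnj: "gmul z (gcnj z) = (gnorm z, 0)"
  by (simp add: gmul_def gcnj_def gnorm_def power2_eq_square)

section \<open>Congruence modulo a rational integer\<close>

lemma gcong_refl [simp]: "gcong m z z"
  by (simp add: gcong_def)

lemma gcong_sym: "gcong m z w \<Longrightarrow> gcong m w z"
  by (simp add: gcong_def cong_sym)

lemma gcong_trans: "gcong m x y \<Longrightarrow> gcong m y z \<Longrightarrow> gcong m x z"
  unfolding gcong_def by (meson cong_trans)

lemma gcong_mul: "gcong m x x' \<Longrightarrow> gcong m y y' \<Longrightarrow> gcong m (gmul x y) (gmul x' y')"
  unfolding gcong_def gmul_def by (auto intro!: cong_add cong_diff cong_mult)

lemma gcong_pow: "gcong m x y \<Longrightarrow> gcong m (gpow x k) (gpow y k)"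
  by (induction k) (simp_all add: gpow_Suc gcong_mul)

lemma gcong_dvd: "gcong n x y \<Longrightarrow> m dvd n \<Longrightarrow> gcong m x y"
  unfolding gcong_def by (meson cong_dvd_modulus int_dvd_int_iff)

lemma gcong_norm: "gcong m x y \<Longrightarrow> [gnorm x = gnorm y] (mod int m)"
  unfolding gcong_def gnorm_def by (auto intro!: cong_add cong_pow)

lemma gcong_gmul_gcnj:
  "[gnorm z = 1] (mod int m) \<Longrightarrow> gcong m (gmul z (gcnj z)) gone"
  by (simp add: gmul_gcnj gcong_def gone_def)

lemma cong_one_imp_coprime: "[a = 1] (mod int n) \<Longrightarrow> coprime (int n) a"
  by (metis cong_gcd_eq coprime_iff_gcd_eq_1 gcd.commute gcd_1_int)

lemma gpow_coprime_exponents: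
  assumes "gcong m (gpow z a) gone" "gcong m (gpow z b) gone" "coprime a b" "a > 0"
  shows "gcong m z gone"
proof -
  obtain x y where xy: "a * x = b * y + 1"
    using bezout_nat[of a b] assms(3,4) by auto
  have "gcong m (gpow z (a * x)) gone"
    unfolding gpow_mult using gcong_pow[OF assms(1), of x] by simp
  moreover have "gpow z (a * x) = gmul (gpow (gpow z b) y) z"
    by (simp only: xy gpow_add gpow_mult gpow_1)
  moreover have "gcong m (gmul (gpow (gpow z b) y) z) (gmul gone z)"
    using gcong_mul[OF gcong_pow[OF assms(2), of y] gcong_refl] by simp
  ultimately show ?thesis
    by (metis gcong_sym gcong_trans gmul_one_left)
qed

(* For z of norm 1 modulo a divisor m of n, z / conj z = z^2 modulo m, so the Fermat
   condition (z / conj z)^F(n) = 1 becomes z^(2 F(n)) = 1 modulo m. *)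
lemma carmichael_norm_one_pow:
  assumes "gaussian_carmichael n" "m dvd n" "coprime (int n) (gnorm z)"
    "[gnorm z = 1] (mod int m)"
  shows "gcong m (gpow z (2 * FF n)) gone"
proof -
  obtain w where inv: "gcong n (gmul (gcnj z) w) gone"
    and fermat: "gcong n (gpow (gmul z w) (FF n)) gone"
    using assms(1,3) unfolding gaussian_carmichael_def gaussian_fermat_psp_def by blast
  have "gmul (gmul z w) (gmul z (gcnj z)) = gmul (gmul z z) (gmul (gcnj z) w)"
    by (simp add: gmul_def algebra_simps)
  moreover have "gcong m (gmul (gmul z w) gone) (gmul (gmul z w) (gmul z (gcnj z)))"
    using gcong_mul[OF gcong_refl gcong_sym[OF gcong_gmul_gcnj[OF assms(4)]]] .
  ultimately have "gcong m (gmul z w) (gmul (gmul z z) (gmul (gcnj z) w))"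
    by simp
  moreover have "gcong m (gmul (gmul z z) (gmul (gcnj z) w)) (gmul (gmul z z) gone)"
    using gcong_mul[OF gcong_refl gcong_dvd[OF inv assms(2)]] .
  ultimately have "gcong m (gmul z w) (gmul z z)"
    using gcong_trans by fastforce
  then have "gcong m (gpow (gmul z z) (FF n)) (gpow (gmul z w) (FF n))"
    by (rule gcong_sym[OF gcong_pow])
  then have "gcong m (gpow (gmul z z) (FF n)) gone"
    using gcong_trans gcong_dvd[OF fermat assms(2)] by blast
  then show ?thesis by (simp add: gpow_square)
qed

(* A prime factor of the odd number n divides neither 2 nor F(n) = n -+ 1. *)
lemma prime_factor_coprime_FF:
  assumes "prime p" "p dvd n" "odd n"
  shows "coprime p (2 * FF n)"
proof -
  have "\<not> p dvd 2"
  proof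
    assume "p dvd 2"
    then have "p = 2" using primes_dvd_imp_eq[OF assms(1) two_is_prime_nat] by simp
    then show False using assms(2,3) by simp
  qed
  moreover have "\<not> p dvd FF n"
  proof
    assume p_FF: "p dvd FF n"
    have "n mod 4 = 1 \<or> n mod 4 = 3" using assms(3) by presburger
    then have "p dvd 1"
    proof
      assume "n mod 4 = 1"
      then have "p dvd n - 1" using p_FF by (simp add: FF_def)
      then show ?thesis using dvd_diff_nat[OF assms(2)] odd_pos[OF assms(3)] by fastforce
    next
      assume "n mod 4 = 3"
      then have "p dvd n + 1" using p_FF by (simp add: FF_def)
      then show ?thesis using dvd_diff_nat[OF _ assms(2)] by fastforce
    qed
    then show False using assms(1) by simp
  qed
  ultimately show ?thesis using assms(1)
    by (metis prime_dvd_mult_iff prime_imp_coprime)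
qed

section \<open>Odd Gaussian Carmichael numbers are squarefree\<close>

lemma gpow_unipotent:
  assumes "int n dvd s * s"
  shows "gcong n (gpow (1, s) k) (1, int k * s)"
proof (induction k)
  case 0
  then show ?case by (simp add: gone_def)
next
  case (Suc k)
  have "gcong n (gpow (1, s) (Suc k)) (gmul (1, s) (1, int k * s))"
    unfolding gpow_Suc using gcong_mul[OF gcong_refl Suc] .
  moreover have "[1 - s * (int k * s) = 1] (mod int n)"
    using dvd_mult2[OF assms, of "int k"] by (simp add: cong_iff_dvd_diff algebra_simps)
  then have "gcong n (gmul (1, s) (1, int k * s)) (1, int (Suc k) * s)"
    unfolding gmul_def gcong_def by (simp add: algebra_simps)
  ultimately show ?case using gcong_trans by blast
qed

(* If p^2 divides n, then z = 1 + (n/p) i has norm 1 modulo n and z^p = 1, so z = 1 by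
   the two Carmichael facts; but n/p is not divisible by n. *)
lemma carmichael_odd_no_square_factor:
  assumes "gaussian_carmichael n" "odd n" "prime p" "p * p dvd n"
  shows False
proof -
  have n_gt_1: "n > 1" using assms(1) by (simp add: gaussian_carmichael_def composite_def)
  obtain t where t: "n = p * p * t" using assms(4) by blast
  define s where "s = p * t"
  have n_eq: "n = p * s" using t s_def by simp
  have p_gt_1: "p > 1" using assms(3) prime_gt_1_nat by blast
  have s_pos: "s > 0" using n_eq n_gt_1 by (cases s) auto
  have s_lt_n: "s < n" using n_eq p_gt_1 s_pos by simp
  have "int s * int s = int n * int t" unfolding t s_def by (simp add: algebra_simps)
  then have sq: "int n dvd int s * int s" by simp
  define z where "z = (1::int, int s)"
  have norm_z: "[gnorm z = 1] (mod int n)"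
    using sq unfolding z_def gnorm_def power2_eq_square by (simp add: cong_iff_dvd_diff)
  have "gcong n (gpow z p) (1, int p * int s)"
    using gpow_unipotent[OF sq] unfolding z_def .
  moreover have "gcong n (1, int p * int s) gone"
    by (simp add: gcong_def gone_def n_eq cong_0_iff)
  ultimately have z_p: "gcong n (gpow z p) gone" by (rule gcong_trans)
  have z_F: "gcong n (gpow z (2 * FF n)) gone"
    using carmichael_norm_one_pow[OF assms(1) dvd_refl cong_one_imp_coprime[OF norm_z] norm_z] .
  have "coprime p (2 * FF n)"
    using prime_factor_coprime_FF[OF assms(3) _ assms(2)] n_eq by simp
  then have "gcong n z gone" using gpow_coprime_exponents[OF z_p z_F] p_gt_1 by simp
  then have "n dvd s" by (simp add: gcong_def z_def gone_def cong_0_iff)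
  then show False using s_pos s_lt_n nat_dvd_not_less by blast
qed

(* Squarefreeness in the form used for the Chinese remainder theorem. *)
lemma carmichael_odd_coprime_cofactor:
  assumes "gaussian_carmichael n" "odd n" "d dvd n"
  shows "coprime d (n div d)"
proof (rule ccontr)
  assume "\<not> coprime d (n div d)"
  then obtain c where c: "c dvd d" "c dvd n div d" "\<not> is_unit c" by (rule not_coprimeE)
  then have "c \<noteq> 1" by auto
  then obtain q where q: "prime q" "q dvd c" using prime_factor_nat by blast
  have "q * q dvd d * (n div d)" using q c by (meson dvd_trans mult_dvd_mono)
  then show False using carmichael_odd_no_square_factor[OF assms(1,2) q(1)] assms(3) by simp
qed

lemma lift_norm_one:
  assumes "n = d * e" "coprime d e" "[gnorm h = 1] (mod int d)"
  obtains z where "gcong d z h" "[gnorm z = 1] (mod int n)"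
proof -
  have cop: "coprime (int d) (int e)" using assms(2) by simp
  obtain x where x: "[x = fst h] (mod int d)" "[x = 1] (mod int e)"
    using binary_chinese_remainder_int[OF cop] by blast
  obtain y where y: "[y = snd h] (mod int d)" "[y = 0] (mod int e)"
    using binary_chinese_remainder_int[OF cop] by blast
  have zh: "gcong d (x, y) h" using x y by (simp add: gcong_def)
  have "[gnorm (x, y) = 1] (mod int d)"
    using gcong_norm[OF zh] assms(3) by (metis cong_trans)
  moreover have "[x^2 + y^2 = 1^2 + 0^2] (mod int e)"
    using x(2) y(2) by (intro cong_add cong_pow)
  then have "[gnorm (x, y) = 1] (mod int e)" by (simp add: gnorm_def)
  ultimately have "[gnorm (x, y) = 1] (mod int d * int e)"
    by (rule coprime_cong_mult[OF _ _ cop])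
  then have "[gnorm (x, y) = 1] (mod int n)" using assms(1) by simp
  with zh show ?thesis by (rule that)
qed

lemma carmichael_no_prime_torsion:
  assumes "gaussian_carmichael n" "odd n" "d dvd n" "prime p" "p dvd n"
    and "[gnorm h = 1] (mod int d)" "gcong d (gpow h p) gone"
  shows "gcong d h gone"
proof -
  have "n = d * (n div d)" using assms(3) by simp
  then obtain z where zh: "gcong d z h" and norm_z: "[gnorm z = 1] (mod int n)"
    using lift_norm_one carmichael_odd_coprime_cofactor[OF assms(1-3)] assms(6) by blast
  have "[gnorm z = 1] (mod int d)"
    using norm_z assms(3) by (meson cong_dvd_modulus int_dvd_int_iff)
  then have "gcong d (gpow z (2 * FF n)) gone"
    using carmichael_norm_one_pow[OF assms(1,3) cong_one_imp_coprime[OF norm_z]] by blast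
  moreover have "gcong d (gpow z p) gone"
    using gcong_trans[OF gcong_pow[OF zh] assms(7)] .
  ultimately have "gcong d z gone"
    using gpow_coprime_exponents prime_factor_coprime_FF[OF assms(4,5,2)]
      prime_gt_0_nat[OF assms(4)] by blast
  then show ?thesis using zh gcong_sym gcong_trans by blast
qed

section \<open>The group G_d\<close>

definition redm :: "nat \<Rightarrow> gint \<Rightarrow> gint" where
  "redm d z = (fst z mod int d, snd z mod int d)"

definition Gd :: "nat \<Rightarrow> gint monoid" where
  "Gd d = \<lparr>carrier = G_set d, mult = (\<lambda>x y. redm d (gmul x y)), one = redm d gone\<rparr>"

lemma gcong_iff_redm: "gcong d x y \<longleftrightarrow> redm d x = redm d y"
  by (simp add: gcong_def redm_def cong_def prod_eq_iff)

lemma gcong_redm: "gcong d (redm d x) x"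
  by (simp add: gcong_def redm_def)

lemma redm_gmul_left: "redm d (gmul (redm d x) y) = redm d (gmul x y)"
  using gcong_mul[OF gcong_redm gcong_refl] gcong_iff_redm by blast

lemma redm_gmul_right: "redm d (gmul x (redm d y)) = redm d (gmul x y)"
  using gcong_mul[OF gcong_refl gcong_redm] gcong_iff_redm by blast

lemma G_set_iff:
  assumes "d > 0"
  shows "x \<in> G_set d \<longleftrightarrow> redm d x = x \<and> [gnorm x = 1] (mod int d)"
proof -
  have reduced: "0 \<le> a \<and> a < int d \<longleftrightarrow> a mod int d = a" for a
    using assms by (metis mod_pos_pos_trivial pos_mod_bound pos_mod_sign of_nat_0_less_iff)
  obtain a b where "x = (a, b)" by (cases x)
  then show ?thesis
    using reduced[of a] reduced[of b] by (auto simp: G_set_def redm_def gnorm_def)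
qed

lemma finite_G_set: "finite (G_set d)"
proof -
  have "G_set d \<subseteq> {0..<int d} \<times> {0..<int d}" by (auto simp: G_set_def)
  then show ?thesis by (rule finite_subset) simp
qed

lemma redm_norm_one:
  "[gnorm x = 1] (mod int d) \<Longrightarrow> [gnorm (redm d x) = 1] (mod int d)"
  using gcong_norm[OF gcong_redm] cong_trans by blast

(* G_d is an abelian group: the inverse of x is its conjugate, since x * conj x = N(x) = 1. *)
lemma Gd_comm_group:
  assumes "d > 0"
  shows "comm_group (Gd d)"
proof (rule comm_groupI)
  fix x y assume "x \<in> carrier (Gd d)" "y \<in> carrier (Gd d)"
  then have "[gnorm (gmul x y) = 1 * 1] (mod int d)"
    unfolding gnorm_mult using assms by (intro cong_mult) (simp_all add: Gd_def G_set_iff)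
  then show "x \<otimes>\<^bsub>Gd d\<^esub> y \<in> carrier (Gd d)"
    using assms redm_norm_one by (simp add: Gd_def G_set_iff redm_def)
next
  show "\<one>\<^bsub>Gd d\<^esub> \<in> carrier (Gd d)"
    using assms redm_norm_one[of gone d] by (simp add: Gd_def G_set_iff gnorm_def gone_def redm_def)
next
  fix x y z
  show "x \<otimes>\<^bsub>Gd d\<^esub> y \<otimes>\<^bsub>Gd d\<^esub> z = x \<otimes>\<^bsub>Gd d\<^esub> (y \<otimes>\<^bsub>Gd d\<^esub> z)"
    by (simp add: Gd_def redm_gmul_left redm_gmul_right gmul_assoc)
next
  fix x y
  show "x \<otimes>\<^bsub>Gd d\<^esub> y = y \<otimes>\<^bsub>Gd d\<^esub> x"
    by (simp add: Gd_def gmul_comm)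
next
  fix x assume "x \<in> carrier (Gd d)"
  then show "\<one>\<^bsub>Gd d\<^esub> \<otimes>\<^bsub>Gd d\<^esub> x = x"
    using assms by (simp add: Gd_def G_set_iff redm_gmul_left)
next
  fix x assume x: "x \<in> carrier (Gd d)"
  then have norm_x: "[gnorm x = 1] (mod int d)" using assms by (simp add: Gd_def G_set_iff)
  define y where "y = redm d (gcnj x)"
  have "y \<in> carrier (Gd d)"
    using assms redm_norm_one[of "gcnj x" d] norm_x
    by (simp add: Gd_def G_set_iff y_def gnorm_gcnj redm_def)
  moreover have "redm d (gmul y x) = redm d gone"
    using gcong_gmul_gcnj[OF norm_x] gcong_iff_redm
    by (simp add: y_def redm_gmul_left redm_gmul_right gmul_comm)
  ultimately show "\<exists>y\<in>carrier (Gd d). y \<otimes>\<^bsub>Gd d\<^esub> x = \<one>\<^bsub>Gd d\<^esub>"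
    by (auto simp: Gd_def)
qed

lemma Gd_pow: "x [^]\<^bsub>Gd d\<^esub> k = redm d (gpow x k)"
proof (induction k)
  case 0
  then show ?case by (simp add: Gd_def)
next
  case (Suc k)
  then show ?case by (simp add: Gd_def redm_gmul_left redm_gmul_right gpow_Suc gmul_comm)
qed

section \<open>Cauchy's theorem\<close>

(* A finite group whose order is divisible by a prime p has an element of order p;
   it is obtained from a Sylow-type subgroup of order p. *)
lemma (in group) cauchy_prime_order:
  assumes "finite (carrier G)" "prime p" "p dvd order G"
  obtains x where "x \<in> carrier G" "x \<noteq> \<one>" "x [^] p = \<one>"
proof -
  have "order G = p ^ 1 * (order G div p)" using assms(3) by simp
  then obtain H where H: "subgroup H G" "card H = p ^ 1"
    using sylow_thm[OF assms(2) is_group _ assms(1)] by blast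
  have "\<not> H \<subseteq> {\<one>}"
  proof
    assume "H \<subseteq> {\<one>}"
    then have "card H \<le> 1" using card_mono[of "{\<one>}" H] by simp
    then show False using H(2) prime_gt_1_nat[OF assms(2)] by simp
  qed
  then obtain x where xH: "x \<in> H" and x_ne: "x \<noteq> \<one>" by blast
  have "x [^]\<^bsub>G\<lparr>carrier := H\<rparr>\<^esub> order (G\<lparr>carrier := H\<rparr>) = \<one>\<^bsub>G\<lparr>carrier := H\<rparr>\<^esub>"
    using group.pow_order_eq_1[OF subgroup_imp_group[OF H(1)]] xH by simp
  then have "x [^] p = \<one>"
    using H(2) nat_pow_consistent[of x p H] by (simp add: order_def)
  then show ?thesis using that xH x_ne subgroup.subset[OF H(1)] by blast
qed

theorem mainTheorem12:
  fixes n d :: nat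
  assumes "odd n" and "gaussian_carmichael n" and "d dvd n" and "d > 0"
  shows "G_cyclic d"
proof (rule ccontr)
  assume "\<not> G_cyclic d"
  then have "gcd (Phi d) d \<noteq> 1" using assms(4) by (simp add: G_cyclic_def)
  then obtain p where "prime p" "p dvd gcd (Phi d) d" using prime_factor_nat by blast
  then have p: "prime p" "p dvd Phi d" "p dvd d" by simp_all
  interpret G: comm_group "Gd d" using Gd_comm_group[OF assms(4)] .
  have "finite (carrier (Gd d))" "p dvd order (Gd d)"
    using finite_G_set p(2) by (simp_all add: Gd_def order_def Phi_def)
  then obtain h where "h \<in> carrier (Gd d)" "h \<noteq> \<one>\<^bsub>Gd d\<^esub>" "h [^]\<^bsub>Gd d\<^esub> p = \<one>\<^bsub>Gd d\<^esub>"
    using G.cauchy_prime_order p(1) by blast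
  then have h: "h \<in> G_set d" "h \<noteq> redm d gone" "redm d (gpow h p) = redm d gone"
    using Gd_pow[of d h p] by (simp_all add: Gd_def)
  then have "gcong d (gpow h p) gone" by (simp add: gcong_iff_redm)
  then have "gcong d h gone"
    using carmichael_no_prime_torsion[OF assms(2,1,3) p(1) dvd_trans[OF p(3) assms(3)]]
      h(1) assms(4) by (simp add: G_set_iff)
  then show False
    using h(1,2) assms(4) by (simp add: gcong_iff_redm G_set_iff)
qed

end
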